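(* Let $(\mathcal{Y},\eta)$ be an $(n,m)$-voltage operator and let $\tau\in\operatorname{Aut}(\mathcal{Y})$ be such that there exists a group homomorphism $\tau^\#:\mathcal{C}^n\to\mathcal{C}^n$ with $\tau^\#(\eta(W))=\eta(W\tau)$ for every $W\in\Pi(\mathcal{Y})$. Then for every $n$-premaniplex $\mathcal{X}$, the premaniplex $\mathcal{X}^{\tau^\#}\rtimes_\eta\mathcal{Y}$ is isomorphic to $\mathcal{X}\rtimes_\eta\mathcal{Y}$.
   Context: An $n$-premaniplex is an edge-coloured graph (semi-edges and parallel edges allowed) with colours $\{0,\dots,n-1\}$ such that every vertex (flag) is the start of exactly one dart of each colour, and for $|i-j|\ge2$ alternating $i,j$-paths of length 4 are closed; $x^i$ is the $i$-adjacent flag of $x$. $\mathcal{C}^n=\langle r_0,\dots,r_{n-1}\mid r_i^2,\ (r_ir_j)^2\ (|i-j|\ge2)\rangle$ acts on the left on flags by $r_ix=x^i$. Isomorphisms are bijections on flags preserving $i$-adjacency for all $i$; automorphisms act on the right and map paths to paths, $W\mapsto W\tau$. For a flag $y$ of an $m$-premaniplex $\mathcal{Y}$ and $\omega\in\mathcal{C}^m$, $W_\omega(y)$ is the homotopy class of paths from $y$ whose colour sequence $i_1,\dots,i_k$ satisfies $r_{i_k}\cdots r_{i_1}=\omega$; these form the fundamental groupoid $\Pi(\mathcal{Y})$. A voltage assignment $\eta:\Pi(\mathcal{Y})\to\mathcal{C}^n$ satisfies $\eta(W_1W_2)=\eta(W_2)\eta(W_1)$; $(\mathcal{Y},\eta)$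 is an $(n,m)$-voltage operator. $\mathcal{X}\rtimes_\eta\mathcal{Y}$ has flags $\mathcal{X}\times\mathcal{Y}$ and $(x,y)^i=(\eta(W_{r_i}(y))x,r_iy)$, $i\in\{0,\dots,m-1\}$. Given a homomorphism $\tau^\#:\mathcal{C}^n\to\mathcal{C}^n$, $\mathcal{X}^{\tau^\#}$ is the $n$-premaniplex with the same flags as $\mathcal{X}$ in which the $i$-adjacent flag of $x$ is $\tau^\#(r_i)x$ (computed in $\mathcal{X}$). *)

theory Defs
  imports "HOL-Algebra.Group"
begin

text \<open>Words over colours {0..<n}; the word [a1,...,ak] represents r_a1 ... r_ak.
  cox_eq n is the congruence generated by r_i^2 = 1 and (r_i r_j)^2 = 1 for |i-j| >= 2.\<close>

inductive cox_eq :: "nat \<Rightarrow> nat list \<Rightarrow> nat list \<Rightarrow> bool" for n :: nat where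
  cox_refl: "set w \<subseteq> {..<n} \<Longrightarrow> cox_eq n w w"
| cox_sym: "cox_eq n v w \<Longrightarrow> cox_eq n w v"
| cox_trans: "cox_eq n u v \<Longrightarrow> cox_eq n v w \<Longrightarrow> cox_eq n u w"
| cox_cancel: "i < n \<Longrightarrow> set u \<subseteq> {..<n} \<Longrightarrow> set v \<subseteq> {..<n} \<Longrightarrow>
      cox_eq n (u @ [i, i] @ v) (u @ v)"
| cox_comm: "i < n \<Longrightarrow> j < n \<Longrightarrow> i + 2 \<le> j \<Longrightarrow> set u \<subseteq> {..<n} \<Longrightarrow> set v \<subseteq> {..<n} \<Longrightarrow>
      cox_eq n (u @ [i, j] @ v) (u @ [j, i] @ v)"

definition cox_class :: "nat \<Rightarrow> nat list \<Rightarrow> nat list set" where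
  "cox_class n w = {v. cox_eq n w v}"

definition Cox :: "nat \<Rightarrow> nat list set monoid" where
  "Cox n = \<lparr> carrier = cox_class n ` {w. set w \<subseteq> {..<n}},
             mult = (\<lambda>A B. \<Union>a\<in>A. \<Union>b\<in>B. cox_class n (a @ b)),
             one = cox_class n [] \<rparr>"

definition gen :: "nat \<Rightarrow> nat \<Rightarrow> nat list set" where
  "gen n i = cox_class n [i]"

text \<open>A premaniplex is given by its flag set F and the adjacency functions
  adj i x = x^i (semi-edges: adj i x = x; parallel edges allowed).\<close>
definition premaniplex :: "nat \<Rightarrow> 'a set \<Rightarrow> (nat \<Rightarrow> 'a \<Rightarrow> 'a) \<Rightarrow> bool" where
  "premaniplex n F adj \<longleftrightarrow>
     (\<forall>i<n. \<forall>x\<in>F. adj i x \<in> F \<and> adj i (adj i x) = x) \<and>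
     (\<forall>i<n. \<forall>j<n. i + 2 \<le> j \<or> j + 2 \<le> i \<longrightarrow>
        (\<forall>x\<in>F. adj j (adj i (adj j (adj i x))) = x))"

text \<open>Left action of words: the word [a1,...,ak] (= r_a1 ... r_ak) sends x to
  r_a1 (r_a2 (... (r_ak x))).\<close>
definition word_act :: "(nat \<Rightarrow> 'a \<Rightarrow> 'a) \<Rightarrow> nat list \<Rightarrow> 'a \<Rightarrow> 'a" where
  "word_act adj w x = foldr adj w x"

definition cox_act :: "(nat \<Rightarrow> 'a \<Rightarrow> 'a) \<Rightarrow> nat list set \<Rightarrow> 'a \<Rightarrow> 'a" where
  "cox_act adj g x = word_act adj (SOME w. w \<in> g) x"

definition premaniplex_iso ::
  "nat \<Rightarrow> 'a set \<Rightarrow> (nat \<Rightarrow> 'a \<Rightarrow> 'a) \<Rightarrow> 'b set \<Rightarrow> (nat \<Rightarrow> 'b \<Rightarrow> 'b) \<Rightarrow> ('a \<Rightarrow> 'b) \<Rightarrow> bool" where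
  "premaniplex_iso n F1 adj1 F2 adj2 f \<longleftrightarrow>
     bij_betw f F1 F2 \<and> (\<forall>i<n. \<forall>x\<in>F1. f (adj1 i x) = adj2 i (f x))"

definition isomorphic_premaniplexes ::
  "nat \<Rightarrow> 'a set \<Rightarrow> (nat \<Rightarrow> 'a \<Rightarrow> 'a) \<Rightarrow> 'b set \<Rightarrow> (nat \<Rightarrow> 'b \<Rightarrow> 'b) \<Rightarrow> bool" where
  "isomorphic_premaniplexes n F1 adj1 F2 adj2 \<longleftrightarrow> (\<exists>f. premaniplex_iso n F1 adj1 F2 adj2 f)"

definition automorphism :: "nat \<Rightarrow> 'a set \<Rightarrow> (nat \<Rightarrow> 'a \<Rightarrow> 'a) \<Rightarrow> ('a \<Rightarrow> 'a) \<Rightarrow> bool" where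
  "automorphism n F adj tau \<longleftrightarrow> premaniplex_iso n F adj F adj tau"

text \<open>The element W_\<omega>(y) of the fundamental groupoid of Y is represented by the pair (y, \<omega>),
  with y a flag of Y and \<omega> \<in> C^m; it ends at \<omega> y, and
  W_\<omega>(y) W_\<nu>(\<omega> y) = W_{\<nu>\<omega>}(y).  A voltage assignment is encoded as
  eta y \<omega> = \<eta>(W_\<omega>(y)).  An automorphism tau maps W_\<omega>(y) to W_\<omega>(y tau).\<close>
definition voltage_assignment ::
  "nat \<Rightarrow> nat \<Rightarrow> 'y set \<Rightarrow> (nat \<Rightarrow> 'y \<Rightarrow> 'y) \<Rightarrow> ('y \<Rightarrow> nat list set \<Rightarrow> nat list set) \<Rightarrow> bool" where
  "voltage_assignment n m FY adjY eta \<longleftrightarrow>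
     (\<forall>y\<in>FY. \<forall>\<omega>\<in>carrier (Cox m). eta y \<omega> \<in> carrier (Cox n)) \<and>
     (\<forall>y\<in>FY. \<forall>\<omega>\<in>carrier (Cox m). \<forall>\<nu>\<in>carrier (Cox m).
        eta y (\<nu> \<otimes>\<^bsub>Cox m\<^esub> \<omega>) = eta (cox_act adjY \<omega> y) \<nu> \<otimes>\<^bsub>Cox n\<^esub> eta y \<omega>)"

definition voltage_operator ::
  "nat \<Rightarrow> nat \<Rightarrow> 'y set \<Rightarrow> (nat \<Rightarrow> 'y \<Rightarrow> 'y) \<Rightarrow> ('y \<Rightarrow> nat list set \<Rightarrow> nat list set) \<Rightarrow> bool" where
  "voltage_operator n m FY adjY eta \<longleftrightarrow>
     premaniplex m FY adjY \<and> voltage_assignment n m FY adjY eta"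

text \<open>Adjacency of X \<rtimes>_\<eta> Y (flags FX \<times> FY): (x,y)^i = (\<eta>(W_{r_i}(y)) x, r_i y).\<close>
definition mix_adj ::
  "nat \<Rightarrow> (nat \<Rightarrow> 'x \<Rightarrow> 'x) \<Rightarrow> (nat \<Rightarrow> 'y \<Rightarrow> 'y) \<Rightarrow> ('y \<Rightarrow> nat list set \<Rightarrow> nat list set)
     \<Rightarrow> nat \<Rightarrow> 'x \<times> 'y \<Rightarrow> 'x \<times> 'y" where
  "mix_adj m adjX adjY eta i p =
     (cox_act adjX (eta (snd p) (gen m i)) (fst p), adjY i (snd p))"

text \<open>Adjacency of X^{\<tau>#}: the i-adjacent flag of x is \<tau>#(r_i) x computed in X.\<close>
definition twist_adj ::
  "nat \<Rightarrow> (nat \<Rightarrow> 'x \<Rightarrow> 'x) \<Rightarrow> (nat list set \<Rightarrow> nat list set) \<Rightarrow> nat \<Rightarrow> 'x \<Rightarrow> 'x" where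
  "twist_adj n adjX tsharp i x = cox_act adjX (tsharp (gen n i)) x"

end

theory Submission
  imports Defs
begin

text \<open>The isomorphism is (x, y) \<mapsto> (x, y\<tau>). The flags of X and of X^{\<tau>#} coincide, and
  C^n acts on X^{\<tau>#} through \<tau>#: a word w moves x in X^{\<tau>#} as \<tau>#([w]) moves it in X
  (for the empty word this uses that \<tau>#(1) is an idempotent, hence acts trivially on X).
  So the i-adjacent flag of (x, y) in X^{\<tau>#} \<rtimes>_\<eta> Y is
  (\<tau>#(\<eta>(W_{r_i}(y))) x, r_i y) = (\<eta>(W_{r_i}(y\<tau>)) x, r_i y), and \<tau> commutes with r_i.\<close>

lemma cox_eq_words:
  assumes "cox_eq n v w" shows "set v \<subseteq> {..<n}" "set w \<subseteq> {..<n}"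
  using assms by induction auto

lemma cox_eq_context:
  assumes "cox_eq n v w" "set u \<subseteq> {..<n}" "set u' \<subseteq> {..<n}"
  shows "cox_eq n (u @ v @ u') (u @ w @ u')"
  using assms
proof induction
  case (cox_refl w) then show ?case by (intro cox_eq.cox_refl) auto
next
  case (cox_sym v w) then show ?case by (auto intro: cox_eq.cox_sym)
next
  case (cox_trans u v w) then show ?case by (auto intro: cox_eq.cox_trans)
next
  case (cox_cancel i l r)
  then show ?case using cox_eq.cox_cancel[of i n "u @ l" "r @ u'"] by simp
next
  case (cox_comm i j l r)
  then show ?case using cox_eq.cox_comm[of i n j "u @ l" "r @ u'"] by simp
qed

lemma cox_eq_append:
  assumes "cox_eq n a a'" "cox_eq n b b'" shows "cox_eq n (a @ b) (a' @ b')"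
proof -
  have "cox_eq n ([] @ a @ b) ([] @ a' @ b)"
    using cox_eq_context[OF assms(1), of "[]" b] cox_eq_words[OF assms(2)] by simp
  moreover have "cox_eq n (a' @ b @ []) (a' @ b' @ [])"
    using cox_eq_context[OF assms(2), of a' "[]"] cox_eq_words[OF assms(1)] by simp
  ultimately show ?thesis by (auto intro: cox_eq.cox_trans)
qed

lemma cox_class_mem: "set w \<subseteq> {..<n} \<Longrightarrow> w \<in> cox_class n w"
  unfolding cox_class_def by (auto intro: cox_eq.cox_refl)

lemma cox_class_eq: "cox_eq n u v \<Longrightarrow> cox_class n u = cox_class n v"
  unfolding cox_class_def by (auto intro: cox_eq.cox_trans cox_eq.cox_sym)

lemma Cox_carrier_class: "set w \<subseteq> {..<n} \<Longrightarrow> cox_class n w \<in> carrier (Cox n)"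
  unfolding Cox_def by auto

lemma Cox_carrierE:
  assumes "g \<in> carrier (Cox n)"
  obtains w where "set w \<subseteq> {..<n}" "g = cox_class n w"
  using assms unfolding Cox_def by auto

lemma Cox_carrier_eq_class_of_mem:
  assumes "g \<in> carrier (Cox n)" "w \<in> g"
  shows "g = cox_class n w"
proof -
  obtain v where "g = cox_class n v" using assms(1) by (rule Cox_carrierE)
  with assms(2) show ?thesis by (metis cox_class_def cox_class_eq mem_Collect_eq)
qed

lemma Cox_mult_class:
  assumes "set a \<subseteq> {..<n}" "set b \<subseteq> {..<n}"
  shows "cox_class n a \<otimes>\<^bsub>Cox n\<^esub> cox_class n b = cox_class n (a @ b)"
proof -
  have "cox_class n (a' @ b') = cox_class n (a @ b)"
    if "a' \<in> cox_class n a" "b' \<in> cox_class n b" for a' b'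
  proof -
    have "cox_eq n (a @ b) (a' @ b')"
      using that by (simp add: cox_class_def cox_eq_append)
    then show ?thesis by (simp add: cox_class_eq)
  qed
  then have "(\<Union>a'\<in>cox_class n a. \<Union>b'\<in>cox_class n b. cox_class n (a' @ b')) = cox_class n (a @ b)"
    using cox_class_mem[OF assms(1)] cox_class_mem[OF assms(2)] by blast
  then show ?thesis by (simp add: Cox_def)
qed

lemma premaniplex_adj_closed: "premaniplex n F adj \<Longrightarrow> i < n \<Longrightarrow> x \<in> F \<Longrightarrow> adj i x \<in> F"
  and premaniplex_adj_adj: "premaniplex n F adj \<Longrightarrow> i < n \<Longrightarrow> x \<in> F \<Longrightarrow> adj i (adj i x) = x"
  unfolding premaniplex_def by blast+

lemma premaniplex_adj_commute:
  assumes X: "premaniplex n F adj" and "i < n" "j < n" "i + 2 \<le> j" "x \<in> F"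
  shows "adj i (adj j x) = adj j (adj i x)"
proof -
  have "adj i (adj j (adj i (adj j x))) = x"
    using assms unfolding premaniplex_def by auto
  then have "adj j (adj i (adj i (adj j (adj i (adj j x))))) = adj j (adj i x)" by simp
  then show ?thesis
    using assms by (simp add: premaniplex_adj_closed premaniplex_adj_adj)
qed

lemma word_act_Nil [simp]: "word_act adj [] x = x"
  and word_act_Cons [simp]: "word_act adj (i # w) x = adj i (word_act adj w x)"
  and word_act_append: "word_act adj (u @ w) x = word_act adj u (word_act adj w x)"
  by (simp_all add: word_act_def)

lemma word_act_closed:
  assumes "premaniplex n F adj" "set w \<subseteq> {..<n}" "x \<in> F"
  shows "word_act adj w x \<in> F"
  using assms(2) by (induction w) (auto simp: assms(3) premaniplex_adj_closed[OF assms(1)])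

lemma word_act_rev_cancel:
  assumes "premaniplex n F adj" "set w \<subseteq> {..<n}" "x \<in> F"
  shows "word_act adj (rev w) (word_act adj w x) = x"
  using assms(2,3)
proof (induction w arbitrary: x)
  case (Cons i w)
  then show ?case
    using word_act_closed[OF assms(1)] premaniplex_adj_adj[OF assms(1)]
    by (simp add: word_act_append)
qed simp

lemma word_act_cox_eq:
  assumes X: "premaniplex n F adj" and "cox_eq n v w" "x \<in> F"
  shows "word_act adj v x = word_act adj w x"
  using assms(2,3)
proof (induction arbitrary: x)
  case (cox_cancel i u v)
  then show ?case
    using word_act_closed[OF X] by (simp add: word_act_append premaniplex_adj_adj[OF X])
next
  case (cox_comm i j u v)
  then have "adj i (adj j (word_act adj v x)) = adj j (adj i (word_act adj v x))"
    using premaniplex_adj_commute[OF X] word_act_closed[OF X] by blast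
  then show ?case by (simp add: word_act_append)
qed simp_all

lemma cox_act_class:
  assumes X: "premaniplex n F adj" and "set w \<subseteq> {..<n}" "x \<in> F"
  shows "cox_act adj (cox_class n w) x = word_act adj w x"
proof -
  have "(SOME v. v \<in> cox_class n w) \<in> cox_class n w"
    using cox_class_mem[OF assms(2)] by (rule someI)
  then show ?thesis
    unfolding cox_act_def cox_class_def
    using word_act_cox_eq[OF X _ assms(3)] by (simp add: cox_eq.cox_sym)
qed

lemma cox_act_closed:
  assumes "premaniplex n F adj" "g \<in> carrier (Cox n)" "x \<in> F"
  shows "cox_act adj g x \<in> F"
proof -
  obtain w where "set w \<subseteq> {..<n}" "g = cox_class n w" using assms(2) by (rule Cox_carrierE)
  then show ?thesis by (simp add: assms(3) cox_act_class[OF assms(1)] word_act_closed[OF assms(1)])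
qed

lemma cox_act_mult:
  assumes X: "premaniplex n F adj" and "g \<in> carrier (Cox n)" "h \<in> carrier (Cox n)" "x \<in> F"
  shows "cox_act adj (g \<otimes>\<^bsub>Cox n\<^esub> h) x = cox_act adj g (cox_act adj h x)"
proof -
  obtain u v where "set u \<subseteq> {..<n}" "g = cox_class n u" "set v \<subseteq> {..<n}" "h = cox_class n v"
    using assms(2,3) by (meson Cox_carrierE)
  then show ?thesis
    using assms(4) by (simp add: Cox_mult_class cox_act_class[OF X] word_act_append word_act_closed[OF X])
qed

lemma cox_act_inj_on:
  assumes X: "premaniplex n F adj" and "g \<in> carrier (Cox n)"
  shows "inj_on (cox_act adj g) F"
proof -
  obtain w where w: "set w \<subseteq> {..<n}" "g = cox_class n w"
    using assms(2) by (rule Cox_carrierE)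
  have "word_act adj (rev w) (cox_act adj g x) = x" if "x \<in> F" for x
    using that w by (simp add: cox_act_class[OF X] word_act_rev_cancel[OF X])
  then show ?thesis by (rule inj_on_inverseI)
qed

lemma cox_act_idempotent:
  assumes X: "premaniplex n F adj" and g: "g \<in> carrier (Cox n)"
    and idem: "g \<otimes>\<^bsub>Cox n\<^esub> g = g" and "x \<in> F"
  shows "cox_act adj g x = x"
proof -
  have "cox_act adj g (cox_act adj g x) = cox_act adj g x"
    using cox_act_mult[OF X g g \<open>x \<in> F\<close>] idem by simp
  then show ?thesis
    using cox_act_inj_on[OF X g] cox_act_closed[OF X g] \<open>x \<in> F\<close> by (meson inj_onD)
qed

lemma twist_word_act:
  assumes X: "premaniplex n F adj" and h: "tsharp \<in> hom (Cox n) (Cox n)"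
    and "set w \<subseteq> {..<n}" "x \<in> F"
  shows "word_act (twist_adj n adj tsharp) w x = cox_act adj (tsharp (cox_class n w)) x"
  using assms(3,4)
proof (induction w arbitrary: x)
  case Nil
  have one: "cox_class n [] \<in> carrier (Cox n)" by (simp add: Cox_carrier_class)
  have "cox_class n [] \<otimes>\<^bsub>Cox n\<^esub> cox_class n [] = cox_class n []"
    using Cox_mult_class[of "[]" n "[]"] by simp
  then have "tsharp (cox_class n []) \<otimes>\<^bsub>Cox n\<^esub> tsharp (cox_class n []) = tsharp (cox_class n [])"
    using hom_mult[OF h one one] by simp
  then show ?case
    using cox_act_idempotent[OF X hom_in_carrier[OF h one]] Nil by simp
next
  case (Cons i w)
  have gens: "gen n i \<in> carrier (Cox n)" "cox_class n w \<in> carrier (Cox n)"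
    using Cons.prems by (simp_all add: gen_def Cox_carrier_class)
  have "cox_class n (i # w) = gen n i \<otimes>\<^bsub>Cox n\<^esub> cox_class n w"
    using Cons.prems Cox_mult_class[of "[i]" n w] by (simp add: gen_def)
  then have "tsharp (cox_class n (i # w)) = tsharp (gen n i) \<otimes>\<^bsub>Cox n\<^esub> tsharp (cox_class n w)"
    using hom_mult[OF h gens] by simp
  then show ?case
    using Cons by (simp add: twist_adj_def cox_act_mult[OF X] hom_in_carrier[OF h] gens)
qed

lemma twist_cox_act:
  assumes X: "premaniplex n F adj" and h: "tsharp \<in> hom (Cox n) (Cox n)"
    and g: "g \<in> carrier (Cox n)" and "x \<in> F"
  shows "cox_act (twist_adj n adj tsharp) g x = cox_act adj (tsharp g) x"
proof -
  \<comment> \<open>cox_act_class would need X^{\<tau>#} to be a premaniplex, so the chosen word is used directly.\<close>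
  define w where "w = (SOME v. v \<in> g)"
  obtain v where v: "set v \<subseteq> {..<n}" "g = cox_class n v" using g by (rule Cox_carrierE)
  then have w: "w \<in> g" unfolding w_def by (meson cox_class_mem someI)
  with v(2) have "cox_eq n v w" by (simp add: cox_class_def)
  then have "set w \<subseteq> {..<n}" by (rule cox_eq_words(2))
  have "cox_act (twist_adj n adj tsharp) g x = word_act (twist_adj n adj tsharp) w x"
    by (simp only: cox_act_def w_def)
  also have "\<dots> = cox_act adj (tsharp (cox_class n w)) x"
    using twist_word_act[OF X h \<open>set w \<subseteq> {..<n}\<close> \<open>x \<in> F\<close>] .
  also have "\<dots> = cox_act adj (tsharp g) x"
    using Cox_carrier_eq_class_of_mem[OF g w] by simp
  finally show ?thesis .
qed

theorem theorem6p3: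
  fixes n m :: nat
    and FY :: "'y set" and adjY :: "nat \<Rightarrow> 'y \<Rightarrow> 'y"
    and eta :: "'y \<Rightarrow> nat list set \<Rightarrow> nat list set"
    and tau :: "'y \<Rightarrow> 'y"
    and tsharp :: "nat list set \<Rightarrow> nat list set"
    and FX :: "'x set" and adjX :: "nat \<Rightarrow> 'x \<Rightarrow> 'x"
  assumes "voltage_operator n m FY adjY eta"
    and "automorphism m FY adjY tau"
    and "tsharp \<in> hom (Cox n) (Cox n)"
    and "\<forall>y\<in>FY. \<forall>\<omega>\<in>carrier (Cox m). tsharp (eta y \<omega>) = eta (tau y) \<omega>"
    and "premaniplex n FX adjX"
  shows "isomorphic_premaniplexes m
           (FX \<times> FY) (mix_adj m (twist_adj n adjX tsharp) adjY eta)
           (FX \<times> FY) (mix_adj m adjX adjY eta)"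
proof -
  have tau_bij: "bij_betw tau FY FY"
    and tau_adj: "\<forall>i<m. \<forall>y\<in>FY. tau (adjY i y) = adjY i (tau y)"
    using assms(2) unfolding automorphism_def premaniplex_iso_def by auto
  have eta_closed: "eta y g \<in> carrier (Cox n)" if "y \<in> FY" "g \<in> carrier (Cox m)" for y g
    using assms(1) that unfolding voltage_operator_def voltage_assignment_def by blast
  have "map_prod id tau (mix_adj m (twist_adj n adjX tsharp) adjY eta i (x, y))
        = mix_adj m adjX adjY eta i (map_prod id tau (x, y))"
    if "i < m" "x \<in> FX" "y \<in> FY" for i x y
  proof -
    have "gen m i \<in> carrier (Cox m)" using \<open>i < m\<close> by (simp add: gen_def Cox_carrier_class)
    then show ?thesis
      using that assms(3-5) tau_adj eta_closed
      by (simp add: mix_adj_def twist_cox_act[of n FX adjX tsharp])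
  qed
  moreover have "bij_betw (map_prod id tau) (FX \<times> FY) (FX \<times> FY)"
    using tau_bij by (simp add: bij_betw_map_prod)
  ultimately show ?thesis
    unfolding isomorphic_premaniplexes_def premaniplex_iso_def by blast
qed

end
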